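(* Let $\|\cdot\|$ be a norm on $\mathbb{R}^d$ and let $\mathbf{X}$ be a random vector in $\mathbb{R}^d$ such that (C1) for every $y>0$ the truncated distribution $\mathbb{P}(\mathbf{X}\in\cdot\mid\|\mathbf{X}\|\le y)$ is nondegenerate (no hyperplane $\mathcal{H}$ has $\mathbb{P}(\mathbf{X}\in\mathcal{H}\mid\|\mathbf{X}\|\le y)=1$), and (C2) the distribution of $\|\mathbf{X}\|$ is absolutely continuous and regularly varying at infinity with index $-\alpha$, $\alpha>0$. Suppose moreover $\alpha\in(2,3]$. Then there exist $C>0$ and $\delta>0$ with $\mathbb{P}(\|\mathbf{X}\|\le\delta)<1$ such that $$\|\Sigma(y)^{-1/2}\|\le C\quad\text{for all } y\ge\delta.$$
   Context: $\Sigma(y)$ is the covariance matrix of the truncated distribution $\mathbb{P}(\mathbf{X}\in\cdot\mid\|\mathbf{X}\|\le y)$, and $\|\Sigma(y)^{-1/2}\|$ is the operator norm of the inverse square root of this (positive definite) matrix. Regular variation of $\|\mathbf{X}\|$ with index $-\alpha$ means $\mathbb{P}(\|\mathbf{X}\|>tx)/\mathbb{P}(\|\mathbf{X}\|>t)\to x^{-\alpha}$ as $t\to\infty$ for every $x>0$. *)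

theory Defs
  imports "HOL-Probability.Probability"
begin

definition is_norm :: "(real^'d \<Rightarrow> real) \<Rightarrow> bool" where
  "is_norm N \<longleftrightarrow> (\<forall>x. N x = 0 \<longleftrightarrow> x = 0) \<and> (\<forall>x y. N (x + y) \<le> N x + N y)
     \<and> (\<forall>c x. N (c *\<^sub>R x) = \<bar>c\<bar> * N x)"

definition trunc_event :: "'a measure \<Rightarrow> ('a \<Rightarrow> real^'d) \<Rightarrow> (real^'d \<Rightarrow> real) \<Rightarrow> real \<Rightarrow> 'a set" where
  "trunc_event M X N y = {\<omega> \<in> space M. N (X \<omega>) \<le> y}"

definition cond_exp_event :: "'a measure \<Rightarrow> 'a set \<Rightarrow> ('a \<Rightarrow> real) \<Rightarrow> real" where
  "cond_exp_event M A f = (\<integral>\<omega>. indicator A \<omega> * f \<omega> \<partial>M) / measure M A"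

definition trunc_cov :: "'a measure \<Rightarrow> ('a \<Rightarrow> real^'d) \<Rightarrow> (real^'d \<Rightarrow> real) \<Rightarrow> real \<Rightarrow> real^'d^'d" where
  "trunc_cov M X N y = (\<chi> i j.
      let A = trunc_event M X N y in
      cond_exp_event M A (\<lambda>\<omega>. X \<omega> $ i * X \<omega> $ j)
      - cond_exp_event M A (\<lambda>\<omega>. X \<omega> $ i) * cond_exp_event M A (\<lambda>\<omega>. X \<omega> $ j))"

definition nondegenerate_trunc :: "'a measure \<Rightarrow> ('a \<Rightarrow> real^'d) \<Rightarrow> (real^'d \<Rightarrow> real) \<Rightarrow> real \<Rightarrow> bool" where
  "nondegenerate_trunc M X N y \<longleftrightarrow>
     measure M (trunc_event M X N y) > 0 \<and>
     (\<forall>a b. a \<noteq> 0 \<longrightarrow>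
        measure M {\<omega> \<in> trunc_event M X N y. a \<bullet> X \<omega> = b} < measure M (trunc_event M X N y))"

definition psd_sqrt :: "real^'n^'n \<Rightarrow> real^'n^'n" where
  "psd_sqrt A = (THE B. transpose B = B \<and> (\<forall>v. 0 \<le> v \<bullet> (B *v v)) \<and> B ** B = A)"

definition inv_sqrt_opnorm :: "real^'n^'n \<Rightarrow> real" where
  "inv_sqrt_opnorm S = onorm (\<lambda>v. psd_sqrt (matrix_inv S) *v v)"

definition regvar_tail :: "'a measure \<Rightarrow> ('a \<Rightarrow> real) \<Rightarrow> real \<Rightarrow> bool" where
  "regvar_tail M R \<alpha> \<longleftrightarrow> (\<forall>x>0.
     ((\<lambda>t. measure M {\<omega> \<in> space M. R \<omega> > t * x} / measure M {\<omega> \<in> space M. R \<omega> > t})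
        \<longlongrightarrow> x powr (-\<alpha>)) at_top)"

end

theory Submission
  imports Defs
begin

(* Write A y for the event ||X|| <= y.  For a direction v, v . Sigma(y) v is the variance of
   v . X conditioned on A y, and P(A y) Var(v . X | A y) = min_c E[(v . X - c)^2; A y] is
   monotone in y.  Hence for y >= delta
     v . Sigma(y) v >= P(A y) Var(v . X | A y) >= P(A delta) v . Sigma(delta) v >= P(A delta) c0 |v|^2,
   where c0 > 0 because Sigma(delta) is positive definite by nondegeneracy.  A uniform lower
   bound c on the quadratic forms of the symmetric matrices Sigma(y) bounds the operator norm of
   Sigma(y)^(-1/2) by c^(-1/2); the square root is unique, hence well defined, by the spectral
   theorem, which is obtained by maximising the Rayleigh quotient.  Regular variation is used only
   to choose delta with P(||X|| > delta) > 0. *)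

section \<open>Symmetric matrices and their square roots\<close>

lemma linear_coeff_eq_0_if_quadratic_nonpos:
  fixes a b :: real
  assumes "\<And>t. 2 * t * a + t\<^sup>2 * b \<le> 0"
  shows "a = 0"
proof (rule ccontr)
  assume "a \<noteq> 0"
  define s where "s = \<bar>b\<bar> + 1"
  have "s > 0" "2 * s + b > 0" by (auto simp: s_def)
  then have "2 * (a / s) * a + (a / s)\<^sup>2 * b = a\<^sup>2 * (2 * s + b) / s\<^sup>2"
    by (simp add: field_simps power2_eq_square)
  also have "\<dots> > 0"
    using \<open>a \<noteq> 0\<close> \<open>s > 0\<close> \<open>2 * s + b > 0\<close> by simp
  finally show False using assms[of "a / s"] by linarith
qed

lemma symmetric_eigenvector_if_rayleigh_max:
  fixes f :: "'a::real_inner \<Rightarrow> 'a"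
  assumes lin: "linear f" and sym: "\<And>x y. f x \<bullet> y = x \<bullet> f y"
    and S: "subspace S" "f ` S \<subseteq> S" and u: "u \<in> S" "norm u = 1"
    and max: "\<And>x. x \<in> S \<Longrightarrow> norm x = 1 \<Longrightarrow> x \<bullet> f x \<le> u \<bullet> f u"
  shows "f u = (u \<bullet> f u) *\<^sub>R u"
proof -
  define l where "l = u \<bullet> f u"
  have uu: "u \<bullet> u = 1" using u(2) by (simp add: dot_square_norm)
  have rayleigh: "x \<bullet> f x \<le> l * (x \<bullet> x)" if "x \<in> S" for x
  proof (cases "x = 0")
    case False
    have "(x /\<^sub>R norm x) \<bullet> f (x /\<^sub>R norm x) \<le> l"
      unfolding l_def using False that S(1) by (intro max) (auto simp: subspace_scale)
    then show ?thesis
      using False by (simp add: linear_scale[OF lin] dot_square_norm power2_eq_square field_simps)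
  qed (simp add: linear_0[OF lin])
  have orth: "w \<bullet> f u = 0" if w: "w \<in> S" "w \<bullet> u = 0" for w
  proof (rule linear_coeff_eq_0_if_quadratic_nonpos)
    fix t
    have "(u + t *\<^sub>R w) \<bullet> f (u + t *\<^sub>R w) \<le> l * ((u + t *\<^sub>R w) \<bullet> (u + t *\<^sub>R w))"
      using w u(1) S(1) by (intro rayleigh) (simp add: subspace_add subspace_scale)
    then show "2 * t * (w \<bullet> f u) + t\<^sup>2 * (w \<bullet> f w - l * (w \<bullet> w)) \<le> 0"
      using sym[of w u] w(2) uu
      by (simp add: linear_add[OF lin] linear_scale[OF lin] inner_add_left inner_add_right
          inner_commute power2_eq_square algebra_simps l_def)
  qed
  define w where "w = f u - l *\<^sub>R u"
  have "w \<in> S" using u(1) S by (auto simp: w_def subspace_diff subspace_scale)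
  moreover have wu: "w \<bullet> u = 0" using uu by (simp add: w_def inner_diff_left l_def inner_commute[of "f u" u])
  ultimately have "w \<bullet> w = 0" using orth by (simp add: w_def inner_diff_right)
  then show ?thesis by (simp add: w_def l_def)
qed

lemma symmetric_unit_eigenvector_exists:
  fixes f :: "'a::euclidean_space \<Rightarrow> 'a"
  assumes lin: "linear f" and sym: "\<And>x y. f x \<bullet> y = x \<bullet> f y"
    and S: "subspace S" "f ` S \<subseteq> S" "S \<noteq> {0}"
  obtains u where "u \<in> S" "norm u = 1" "f u = (u \<bullet> f u) *\<^sub>R u"
proof -
  obtain z where z: "z \<in> S" "z \<noteq> 0" using S subspace_0 by blast
  let ?K = "sphere 0 1 \<inter> S"
  have "compact ?K" by (simp add: closed_subspace compact_Int_closed S(1))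
  moreover have "z /\<^sub>R norm z \<in> ?K" using z S(1) by (simp add: subspace_scale)
  moreover have "continuous_on ?K (\<lambda>x. x \<bullet> f x)"
    using linear_continuous_on[OF linear_conv_bounded_linear[THEN iffD1, OF lin]]
    by (intro continuous_intros) (auto intro: continuous_on_subset)
  ultimately obtain u where u: "u \<in> ?K" "\<And>x. x \<in> ?K \<Longrightarrow> x \<bullet> f x \<le> u \<bullet> f u"
    using continuous_attains_sup[of ?K "\<lambda>x. x \<bullet> f x"] by blast
  then have "u \<in> S" "norm u = 1" by auto
  moreover have "f u = (u \<bullet> f u) *\<^sub>R u"
    using u(2) by (intro symmetric_eigenvector_if_rayleigh_max[OF lin sym S(1,2) \<open>u \<in> S\<close> \<open>norm u = 1\<close>]) auto
  ultimately show thesis by (rule that)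
qed

lemma symmetric_orthonormal_eigenbasis:
  fixes f :: "'a::euclidean_space \<Rightarrow> 'a"
  assumes lin: "linear f" and sym: "\<And>x y. f x \<bullet> y = x \<bullet> f y"
    and "subspace S" "f ` S \<subseteq> S"
  shows "\<exists>B. B \<subseteq> S \<and> finite B \<and> pairwise orthogonal B \<and> span B = S \<and>
     (\<forall>b\<in>B. norm b = 1 \<and> f b = (b \<bullet> f b) *\<^sub>R b)"
  using assms(3,4)
proof (induction "dim S" arbitrary: S rule: less_induct)
  case less
  show ?case
  proof (cases "S = {0}")
    case True
    then show ?thesis by (intro exI[of _ "{}"]) auto
  next
    case False
    then obtain u where uS: "u \<in> S" and nu: "norm u = 1" and eig: "f u = (u \<bullet> f u) *\<^sub>R u"
      using symmetric_unit_eigenvector_exists[OF lin sym less.prems False] by blast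
    have uu: "u \<bullet> u = 1" using nu by (simp add: dot_square_norm)
    define S' where "S' = {x \<in> S. x \<bullet> u = 0}"
    have subS': "subspace S'"
      using less.prems(1) unfolding S'_def subspace_def by (auto simp: inner_add_left)
    have "x \<bullet> f u = 0" if "x \<bullet> u = 0" for x
      using that by (subst eig) simp
    then have invS': "f ` S' \<subseteq> S'"
      using less.prems(2) sym[of _ u] by (auto simp: S'_def)
    have "S' \<subset> S" using uS uu unfolding S'_def by force
    then have "dim S' < dim S"
      using dim_psubset span_eq_iff subS' less.prems(1) by metis
    then obtain B' where B': "B' \<subseteq> S'" "finite B'" "pairwise orthogonal B'" "span B' = S'"
        "\<forall>b\<in>B'. norm b = 1 \<and> f b = (b \<bullet> f b) *\<^sub>R b"
      using less.hyps subS' invS' by blast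
    have "S \<subseteq> span (insert u B')"
    proof
      fix x assume "x \<in> S"
      then have "x - (x \<bullet> u) *\<^sub>R u \<in> span B'"
        using uS uu less.prems(1) B'(4) by (simp add: S'_def inner_diff_left subspace_diff subspace_scale)
      then have "(x - (x \<bullet> u) *\<^sub>R u) + (x \<bullet> u) *\<^sub>R u \<in> span (insert u B')"
        by (meson span_add span_base span_mono span_scale insertI1 subset_insertI subsetD)
      then show "x \<in> span (insert u B')" by simp
    qed
    moreover have "insert u B' \<subseteq> S" using B'(1) uS by (auto simp: S'_def)
    moreover have "pairwise orthogonal (insert u B')"
      using B'(1,3) uu unfolding pairwise_insert by (auto simp: S'_def orthogonal_def inner_commute)
    ultimately show ?thesis
      using B' nu eig less.prems(1) span_minimal[of "insert u B'" S]
      by (intro exI[of _ "insert u B'"]) auto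
  qed
qed

lemma symmetric_matrix_iff_inner:
  fixes A :: "real^'n^'n"
  shows "transpose A = A \<longleftrightarrow> (\<forall>x y. (A *v x) \<bullet> y = x \<bullet> (A *v y))"
proof
  assume "transpose A = A"
  then show "\<forall>x y. (A *v x) \<bullet> y = x \<bullet> (A *v y)"
    by (metis dot_lmul_matrix vector_transpose_matrix)
next
  assume "\<forall>x y. (A *v x) \<bullet> y = x \<bullet> (A *v y)"
  then have "(\<lambda>x. transpose A *v x) = (\<lambda>x. A *v x)"
    using adjoint_unique adjoint_matrix by metis
  then show "transpose A = A" by (simp add: matrix_eq fun_eq_iff)
qed

lemma inner_orthonormal_sum:
  fixes B :: "'a::real_inner set"
  assumes "finite B" "pairwise orthogonal B" "\<And>b. b \<in> B \<Longrightarrow> norm b = 1" "b \<in> B"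
  shows "b \<bullet> (\<Sum>b'\<in>B. c b' *\<^sub>R b') = c b"
proof -
  have "b \<bullet> (\<Sum>b'\<in>B. c b' *\<^sub>R b') = (\<Sum>b'\<in>B. if b' = b then c b else 0)"
    unfolding inner_sum_right
  proof (rule sum.cong)
    fix b' assume "b' \<in> B"
    then show "b \<bullet> c b' *\<^sub>R b' = (if b' = b then c b else 0)"
      using assms(2-4) pairwiseD[OF assms(2) assms(4)]
      by (auto simp: orthogonal_def dot_square_norm)
  qed simp
  then show ?thesis using assms(1,4) by simp
qed

lemma symmetric_matrix_spectral:
  fixes A :: "real^'n^'n"
  assumes "transpose A = A"
  obtains B lam where "finite B" "pairwise orthogonal B" "\<And>b. b \<in> B \<Longrightarrow> norm b = 1"
    "\<And>b. b \<in> B \<Longrightarrow> A *v b = lam b *\<^sub>R b" "\<And>x. x = (\<Sum>b\<in>B. (b \<bullet> x) *\<^sub>R b)"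
proof -
  have "\<And>x y. (A *v x) \<bullet> y = x \<bullet> (A *v y)"
    using assms symmetric_matrix_iff_inner by blast
  from symmetric_orthonormal_eigenbasis[OF matrix_vector_mul_linear this subspace_UNIV]
  obtain B where B: "finite B" "pairwise orthogonal B" "span B = UNIV"
      and B': "\<forall>b\<in>B. norm b = 1 \<and> A *v b = (b \<bullet> (A *v b)) *\<^sub>R b"
    by blast
  have "x = (\<Sum>b\<in>B. (b \<bullet> x) *\<^sub>R b)" for x
    using orthonormal_basis_expand[of B x] B B' by (simp add: inner_commute[of x])
  with B B' show thesis by (intro that) auto
qed

lemma psd_matrix_sqrt_eigenvector:
  fixes C :: "real^'n^'n"
  assumes sym: "transpose C = C" and psd: "\<And>v. 0 \<le> v \<bullet> (C *v v)"
    and eig: "(C ** C) *v b = \<mu> *\<^sub>R b" and "\<mu> \<ge> 0"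
  shows "C *v b = sqrt \<mu> *\<^sub>R b"
proof -
  define s where "s = sqrt \<mu>"
  have s: "s \<ge> 0" "s * s = \<mu>" using \<open>\<mu> \<ge> 0\<close> by (auto simp: s_def)
  define z where "z = C *v b - s *\<^sub>R b"
  have "C *v z = - s *\<^sub>R z"
    using eig s by (simp add: z_def matrix_vector_mul_assoc matrix_vector_mult_diff_distrib
        matrix_vector_mult_scaleR algebra_simps)
  then have "s * (z \<bullet> z) \<le> 0" using psd[of z] by simp
  then have "s = 0 \<or> z \<bullet> z = 0"
    using s(1) inner_ge_zero[of z] by (auto simp: mult_le_0_iff)
  then consider "s = 0" | "z = 0" by auto
  then show ?thesis
  proof cases
    case 1
    have "(C *v b) \<bullet> (C *v b) = b \<bullet> ((C ** C) *v b)"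
      using sym by (simp add: symmetric_matrix_iff_inner matrix_vector_mul_assoc)
    also have "\<dots> = 0" using eig s 1 by simp
    finally show ?thesis using 1 by (simp add: s_def)
  qed (simp add: z_def s_def)
qed

lemma psd_matrix_sqrt_exists:
  fixes A :: "real^'n^'n"
  assumes sym: "transpose A = A" and psd: "\<And>v. 0 \<le> v \<bullet> (A *v v)"
  obtains C where "transpose C = C" "\<And>v. 0 \<le> v \<bullet> (C *v v)" "C ** C = A"
proof -
  obtain B lam where B: "finite B" "pairwise orthogonal B" "\<And>b. b \<in> B \<Longrightarrow> norm b = 1"
    and eig: "\<And>b. b \<in> B \<Longrightarrow> A *v b = lam b *\<^sub>R b"
    and expand: "\<And>x. x = (\<Sum>b\<in>B. (b \<bullet> x) *\<^sub>R b)"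
    using symmetric_matrix_spectral[OF sym] by blast
  have lam: "lam b \<ge> 0" if "b \<in> B" for b
    using psd[of b] eig[OF that] B(3)[OF that] by (simp add: dot_square_norm)
  have A_expand: "A *v x = (\<Sum>b\<in>B. (lam b * (b \<bullet> x)) *\<^sub>R b)" for x
  proof -
    have "A *v x = A *v (\<Sum>b\<in>B. (b \<bullet> x) *\<^sub>R b)" by (rule arg_cong[OF expand])
    then show ?thesis
      by (simp add: linear_sum[OF matrix_vector_mul_linear] matrix_vector_mult_scaleR eig mult.commute)
  qed
  define g where "g x = (\<Sum>b\<in>B. (sqrt (lam b) * (b \<bullet> x)) *\<^sub>R b)" for x
  have "linear g" unfolding linear_iff g_def
    by (simp add: algebra_simps sum.distrib scaleR_sum_right)
  then have Gv: "matrix g *v x = g x" for x using matrix_vector_mul(2) by metis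
  have g_coeff: "b \<bullet> g x = sqrt (lam b) * (b \<bullet> x)" if "b \<in> B" for b x
    unfolding g_def by (rule inner_orthonormal_sum[OF B(1-3) that])
  show thesis
  proof
    show "transpose (matrix g) = matrix g"
      unfolding symmetric_matrix_iff_inner Gv g_def
      by (simp add: inner_sum_right inner_sum_left inner_commute mult.commute mult.left_commute)
    have "v \<bullet> (matrix g *v v) = (\<Sum>b\<in>B. sqrt (lam b) * (b \<bullet> v)\<^sup>2)" for v
      unfolding Gv g_def by (simp add: inner_sum_right inner_commute[of v] power2_eq_square mult.assoc)
    then show "0 \<le> v \<bullet> (matrix g *v v)" for v by (simp add: sum_nonneg lam)
    have "(sqrt (lam b) * (b \<bullet> g x)) *\<^sub>R b = (lam b * (b \<bullet> x)) *\<^sub>R b" if "b \<in> B" for b x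
      using lam[OF that] by (simp add: g_coeff[OF that] mult.assoc[symmetric])
    then have "g (g x) = A *v x" for x
      unfolding A_expand g_def[of "g x"] by (intro sum.cong refl) auto
    then show "matrix g ** matrix g = A"
      by (simp add: matrix_eq matrix_vector_mul_assoc[symmetric] Gv)
  qed
qed

lemma psd_matrix_sqrt_unique:
  fixes C D :: "real^'n^'n"
  assumes C: "transpose C = C" "\<And>v. 0 \<le> v \<bullet> (C *v v)"
    and D: "transpose D = D" "\<And>v. 0 \<le> v \<bullet> (D *v v)"
    and "C ** C = D ** D"
  shows "C = D"
proof -
  define A where "A = C ** C"
  have "transpose A = A" using C(1) by (simp add: A_def matrix_transpose_mul)
  then obtain B lam where "finite B" "pairwise orthogonal B" and B: "\<And>b. b \<in> B \<Longrightarrow> norm b = 1"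
    and eig: "\<And>b. b \<in> B \<Longrightarrow> A *v b = lam b *\<^sub>R b"
    and expand: "\<And>x. x = (\<Sum>b\<in>B. (b \<bullet> x) *\<^sub>R b)"
    by (rule symmetric_matrix_spectral) blast
  have "C *v b = D *v b" if "b \<in> B" for b
  proof -
    have "lam b = b \<bullet> (A *v b)"
      using eig[OF that] B[OF that] by (simp add: dot_square_norm)
    also have "\<dots> = (C *v b) \<bullet> (C *v b)"
      using C(1) by (simp add: A_def symmetric_matrix_iff_inner matrix_vector_mul_assoc[symmetric])
    finally have "lam b \<ge> 0" by simp
    have "(C ** C) *v b = lam b *\<^sub>R b" "(D ** D) *v b = lam b *\<^sub>R b"
      using eig[OF that] \<open>C ** C = D ** D\<close> by (simp_all add: A_def)
    then have "C *v b = sqrt (lam b) *\<^sub>R b" "D *v b = sqrt (lam b) *\<^sub>R b"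
      using psd_matrix_sqrt_eigenvector[OF C] psd_matrix_sqrt_eigenvector[OF D] \<open>lam b \<ge> 0\<close>
      by blast+
    then show ?thesis by simp
  qed
  then have "C *v x = D *v x" for x
  proof -
    have "C *v x = C *v (\<Sum>b\<in>B. (b \<bullet> x) *\<^sub>R b)" by (rule arg_cong[OF expand])
    also have "\<dots> = D *v (\<Sum>b\<in>B. (b \<bullet> x) *\<^sub>R b)"
      using \<open>\<And>b. b \<in> B \<Longrightarrow> C *v b = D *v b\<close>
      by (simp add: linear_sum[OF matrix_vector_mul_linear] matrix_vector_mult_scaleR)
    also have "\<dots> = D *v x" by (rule arg_cong[OF expand[symmetric]])
    finally show ?thesis .
  qed
  then show ?thesis by (simp add: matrix_eq)
qed

lemma psd_sqrt:
  fixes A :: "real^'n^'n"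
  assumes "transpose A = A" and "\<And>v. 0 \<le> v \<bullet> (A *v v)"
  shows "transpose (psd_sqrt A) = psd_sqrt A" "0 \<le> v \<bullet> (psd_sqrt A *v v)"
    "psd_sqrt A ** psd_sqrt A = A"
proof -
  obtain C where C: "transpose C = C" "\<And>v. 0 \<le> v \<bullet> (C *v v)" "C ** C = A"
    using psd_matrix_sqrt_exists[OF assms] by blast
  have "\<exists>!C. transpose C = C \<and> (\<forall>v. 0 \<le> v \<bullet> (C *v v)) \<and> C ** C = A"
  proof (rule ex1I[of _ C])
    fix D assume D: "transpose D = D \<and> (\<forall>v. 0 \<le> v \<bullet> (D *v v)) \<and> D ** D = A"
    show "D = C" by (rule psd_matrix_sqrt_unique) (use C D in auto)
  qed (use C in auto)
  from theI'[OF this] show "transpose (psd_sqrt A) = psd_sqrt A" "0 \<le> v \<bullet> (psd_sqrt A *v v)"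
    "psd_sqrt A ** psd_sqrt A = A"
    unfolding psd_sqrt_def by auto
qed

lemma onorm_psd_sqrt_le:
  fixes A :: "real^'n^'n"
  assumes "transpose A = A" and "\<And>v. 0 \<le> v \<bullet> (A *v v)"
    and bound: "\<And>v. v \<bullet> (A *v v) \<le> K * (v \<bullet> v)"
  shows "onorm (\<lambda>v. psd_sqrt A *v v) \<le> sqrt K"
proof (rule onorm_le)
  fix v :: "real^'n"
  let ?R = "psd_sqrt A"
  obtain b :: "real^'n" where "b \<in> Basis" using nonempty_Basis by blast
  then have "0 \<le> K" using bound[of b] assms(2)[of b] by simp
  have "(norm (?R *v v))\<^sup>2 = (?R *v v) \<bullet> (?R *v v)"
    by (simp add: power2_norm_eq_inner)
  also have "\<dots> = v \<bullet> ((?R ** ?R) *v v)"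
    using psd_sqrt(1)[OF assms(1,2)]
    by (simp add: symmetric_matrix_iff_inner matrix_vector_mul_assoc)
  also have "\<dots> \<le> (sqrt K * norm v)\<^sup>2"
    using bound[of v] psd_sqrt(3)[OF assms(1,2)] \<open>0 \<le> K\<close>
    by (simp add: power_mult_distrib power2_norm_eq_inner)
  finally show "norm (?R *v v) \<le> sqrt K * norm v"
    by (rule power2_le_imp_le) (simp add: \<open>0 \<le> K\<close>)
qed

lemma matrix_inv_invertible:
  fixes A :: "'a::field^'n^'n"
  assumes "invertible A"
  shows "A ** matrix_inv A = mat 1" "matrix_inv A ** A = mat 1"
  using someI_ex[OF assms[unfolded invertible_def]] unfolding matrix_inv_def by auto

lemma coercive_matrix_inv:
  fixes S :: "real^'n^'n"
  assumes sym: "transpose S = S" and "c > 0"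
    and coercive: "\<And>v. c * (v \<bullet> v) \<le> v \<bullet> (S *v v)"
  shows "transpose (matrix_inv S) = matrix_inv S"
    and "0 \<le> v \<bullet> (matrix_inv S *v v)"
    and "v \<bullet> (matrix_inv S *v v) \<le> (1 / c) * (v \<bullet> v)"
proof -
  have "x = 0" if "S *v x = 0" for x
    using coercive[of x] that \<open>c > 0\<close> inner_ge_zero[of x] by (simp add: mult_le_0_iff)
  then have "invertible S"
    using matrix_left_invertible_ker invertible_left_inverse by blast
  then have inverse: "S *v (matrix_inv S *v x) = x" for x
    by (simp add: matrix_vector_mul_assoc matrix_inv_invertible)
  have symS: "(S *v x) \<bullet> y = x \<bullet> (S *v y)" for x y
    using sym symmetric_matrix_iff_inner by blast
  have "(matrix_inv S *v x) \<bullet> y = x \<bullet> (matrix_inv S *v y)" for x y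
    using symS[of "matrix_inv S *v x" "matrix_inv S *v y"] by (simp add: inverse)
  then show "transpose (matrix_inv S) = matrix_inv S"
    unfolding symmetric_matrix_iff_inner by blast
  define w where "w = matrix_inv S *v v"
  have vw: "v \<bullet> (matrix_inv S *v v) = w \<bullet> (S *v w)"
    by (simp add: w_def inverse inner_commute[of v])
  moreover have "0 \<le> c * (w \<bullet> w)" using \<open>c > 0\<close> by simp
  ultimately show "0 \<le> v \<bullet> (matrix_inv S *v v)"
    using coercive[of w] by linarith
  have "norm w * (c * norm w) = c * (w \<bullet> w)"
    by (simp add: power2_norm_eq_inner[symmetric] power2_eq_square)
  also have "\<dots> \<le> w \<bullet> v"
    using coercive[of w] by (simp add: w_def inverse)
  also have "\<dots> \<le> norm w * norm v"
    by (rule norm_cauchy_schwarz)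
  finally have "c * norm w \<le> norm v"
    by (cases "w = 0") (simp_all add: mult_le_cancel_left_pos)
  have "v \<bullet> (matrix_inv S *v v) \<le> norm v * norm w"
    unfolding w_def by (rule norm_cauchy_schwarz)
  also have "\<dots> \<le> norm v * (norm v / c)"
    using \<open>c > 0\<close> \<open>c * norm w \<le> norm v\<close>
    by (intro mult_left_mono) (simp_all add: pos_le_divide_eq mult.commute)
  also have "\<dots> = (1 / c) * (v \<bullet> v)"
    by (simp add: power2_norm_eq_inner[symmetric] power2_eq_square)
  finally show "v \<bullet> (matrix_inv S *v v) \<le> (1 / c) * (v \<bullet> v)" .
qed

lemma inv_sqrt_opnorm_le:
  fixes S :: "real^'n^'n"
  assumes "transpose S = S" and "c > 0" and "\<And>v. c * (v \<bullet> v) \<le> v \<bullet> (S *v v)"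
  shows "inv_sqrt_opnorm S \<le> 1 / sqrt c"
  using onorm_psd_sqrt_le[OF coercive_matrix_inv[OF assms]]
  by (simp add: inv_sqrt_opnorm_def real_sqrt_divide)

lemma pos_def_matrix_coercive:
  fixes S :: "real^'n^'n"
  assumes "\<And>v. v \<noteq> 0 \<Longrightarrow> 0 < v \<bullet> (S *v v)"
  obtains c where "c > 0" "\<And>v. c * (v \<bullet> v) \<le> v \<bullet> (S *v v)"
proof -
  have "continuous_on UNIV ((*v) S)"
    by (rule linear_continuous_on[OF matrix_vector_mul_bounded_linear])
  then have cont: "continuous_on UNIV (\<lambda>v. v \<bullet> (S *v v))"
    by (intro continuous_on_inner continuous_on_id)
  obtain b :: "real^'n" where "b \<in> Basis" using nonempty_Basis by blast
  then have "sphere (0::real^'n) 1 \<noteq> {}" by auto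
  then obtain u where u: "u \<in> sphere 0 1"
      "\<And>w. w \<in> sphere 0 1 \<Longrightarrow> u \<bullet> (S *v u) \<le> w \<bullet> (S *v w)"
    using continuous_attains_inf[OF compact_sphere _ continuous_on_subset[OF cont]] by blast
  show thesis
  proof
    have "u \<noteq> 0" using u(1) by auto
    then show "0 < u \<bullet> (S *v u)" by (rule assms)
    show "(u \<bullet> (S *v u)) * (v \<bullet> v) \<le> v \<bullet> (S *v v)" for v
    proof (cases "v = 0")
      case False
      then have "u \<bullet> (S *v u) \<le> (v /\<^sub>R norm v) \<bullet> (S *v (v /\<^sub>R norm v))"
        by (intro u(2)) simp
      then have "(norm v)\<^sup>2 * (u \<bullet> (S *v u)) \<le> v \<bullet> (S *v v)"
        using False by (simp add: matrix_vector_mult_scaleR field_simps power2_eq_square)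
      then show ?thesis by (simp add: power2_norm_eq_inner mult.commute)
    qed simp
  qed
qed

section \<open>Norms on real vectors\<close>

lemma is_norm_basic:
  assumes "is_norm N"
  shows is_norm_zero: "N 0 = 0" and is_norm_minus: "N (- x) = N x" and is_norm_nonneg: "0 \<le> N x"
proof -
  have scale: "N (c *\<^sub>R x) = \<bar>c\<bar> * N x" and triangle: "N (x + y) \<le> N x + N y" for c x y
    using assms unfolding is_norm_def by auto
  show "N 0 = 0" using scale[of 0 0] by simp
  show "N (- x) = N x" for x using scale[of "-1" x] by simp
  then show "0 \<le> N x" using triangle[of x "- x"] \<open>N 0 = 0\<close> by simp
qed

lemma is_norm_sum_le:
  assumes "is_norm N"
  shows "N (\<Sum>a\<in>A. f a) \<le> (\<Sum>a\<in>A. N (f a))"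
proof (induction A rule: infinite_finite_induct)
  case (insert a A)
  have "N (f a + sum f A) \<le> N (f a) + N (sum f A)" using assms unfolding is_norm_def by blast
  with insert show ?case by simp
qed (simp_all add: is_norm_zero[OF assms])

lemma is_norm_le_norm:
  assumes "is_norm N"
  obtains K where "K \<ge> 0" "\<And>x. N x \<le> K * norm x"
proof
  show "(\<Sum>b\<in>Basis. N b) \<ge> 0" by (simp add: sum_nonneg is_norm_nonneg[OF assms])
  fix x :: "real^'a"
  have "N x = N (\<Sum>b\<in>Basis. (x \<bullet> b) *\<^sub>R b)" by (simp add: euclidean_representation)
  also have "\<dots> \<le> (\<Sum>b\<in>Basis. N ((x \<bullet> b) *\<^sub>R b))" by (rule is_norm_sum_le[OF assms])
  also have "\<dots> = (\<Sum>b\<in>Basis. \<bar>x \<bullet> b\<bar> * N b)" using assms by (simp add: is_norm_def)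
  also have "\<dots> \<le> (\<Sum>b\<in>Basis. norm x * N b)"
    by (intro sum_mono mult_right_mono Basis_le_norm is_norm_nonneg[OF assms])
  finally show "N x \<le> (\<Sum>b\<in>Basis. N b) * norm x" by (simp add: sum_distrib_left mult.commute)
qed

lemma is_norm_continuous:
  assumes "is_norm N"
  shows "continuous_on UNIV N"
proof -
  obtain K where "K \<ge> 0" and K: "\<And>x. N x \<le> K * norm x" using is_norm_le_norm[OF assms] by blast
  have "\<bar>N x - N y\<bar> \<le> K * norm (x - y)" for x y
  proof -
    have "N x \<le> N (x - y) + N y" "N y \<le> N (x - y) + N x"
      using assms unfolding is_norm_def
      by (metis diff_add_cancel, metis diff_add_cancel is_norm_minus[OF assms] minus_diff_eq)
    then show ?thesis using K[of "x - y"] by linarith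
  qed
  then show ?thesis
    by (intro uniformly_continuous_imp_continuous lipschitz_on_uniformly_continuous[of K]
        lipschitz_onI) (simp_all add: dist_real_def dist_norm \<open>K \<ge> 0\<close>)
qed

lemma is_norm_ge_norm:
  assumes "is_norm N"
  obtains k where "k > 0" "\<And>x. k * norm x \<le> N x"
proof -
  obtain b :: "real^'a" where "b \<in> Basis" using nonempty_Basis by blast
  then have "sphere (0::real^'a) 1 \<noteq> {}" by auto
  then obtain u where u: "u \<in> sphere 0 1" "\<And>x. x \<in> sphere 0 1 \<Longrightarrow> N u \<le> N x"
    using continuous_attains_inf[OF compact_sphere _ continuous_on_subset[OF is_norm_continuous[OF assms]]]
    by blast
  show thesis
  proof
    have "u \<noteq> 0" using u(1) by auto
    then show "N u > 0" using assms is_norm_nonneg[OF assms, of u] unfolding is_norm_def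
      by (metis less_eq_real_def)
    show "N u * norm x \<le> N x" for x
    proof (cases "x = 0")
      case False
      then have "N u \<le> N (x /\<^sub>R norm x)" by (intro u(2)) simp
      also have "\<dots> = N x / norm x" using assms by (simp add: is_norm_def divide_inverse mult.commute)
      finally show ?thesis using False by (simp add: field_simps)
    qed (simp add: is_norm_zero[OF assms])
  qed
qed

section \<open>Conditional variance given an event\<close>

definition cond_var_event :: "'a measure \<Rightarrow> 'a set \<Rightarrow> ('a \<Rightarrow> real) \<Rightarrow> real" where
  "cond_var_event M A Z = cond_exp_event M A (\<lambda>\<omega>. (Z \<omega>)\<^sup>2) - (cond_exp_event M A Z)\<^sup>2"

lemma cond_exp_event_cmult: "cond_exp_event M A (\<lambda>\<omega>. c * f \<omega>) = c * cond_exp_event M A f"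
  by (simp add: cond_exp_event_def mult.left_commute)

lemma cond_exp_event_sum:
  assumes "\<And>i. i \<in> I \<Longrightarrow> integrable M (\<lambda>\<omega>. indicator A \<omega> * f i \<omega>)"
  shows "cond_exp_event M A (\<lambda>\<omega>. \<Sum>i\<in>I. f i \<omega>) = (\<Sum>i\<in>I. cond_exp_event M A (f i))"
  using assms by (simp add: cond_exp_event_def sum_distrib_left sum_divide_distrib)

context finite_measure
begin

lemma integrable_indicator_mult_bounded:
  fixes f :: "'a \<Rightarrow> real"
  assumes "A \<in> sets M" "f \<in> borel_measurable M" "\<And>\<omega>. \<omega> \<in> A \<Longrightarrow> \<bar>f \<omega>\<bar> \<le> B"
  shows "integrable M (\<lambda>\<omega>. indicator A \<omega> * f \<omega>)"
proof (rule integrable_const_bound[where B = "\<bar>B\<bar>"])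
  show "AE \<omega> in M. norm (indicator A \<omega> * f \<omega>) \<le> \<bar>B\<bar>"
  proof (rule AE_I2)
    fix \<omega>
    show "norm (indicator A \<omega> * f \<omega>) \<le> \<bar>B\<bar>"
      using assms(3)[of \<omega>] abs_ge_self[of B] by (cases "\<omega> \<in> A") auto
  qed
qed (use assms(1,2) in measurable)

lemma cond_exp_event_shifted_square:
  assumes A: "A \<in> sets M" "measure M A > 0"
    and Z: "integrable M (\<lambda>\<omega>. indicator A \<omega> * Z \<omega>)" "integrable M (\<lambda>\<omega>. indicator A \<omega> * (Z \<omega>)\<^sup>2)"
  shows "integrable M (\<lambda>\<omega>. indicator A \<omega> * (Z \<omega> - c)\<^sup>2)"
    and "cond_exp_event M A (\<lambda>\<omega>. (Z \<omega> - c)\<^sup>2) = cond_var_event M A Z + (c - cond_exp_event M A Z)\<^sup>2"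
proof -
  have expand: "(\<lambda>\<omega>. indicator A \<omega> * (Z \<omega> - c)\<^sup>2) =
      (\<lambda>\<omega>. indicator A \<omega> * (Z \<omega>)\<^sup>2 - 2 * c * (indicator A \<omega> * Z \<omega>) + c\<^sup>2 * indicator A \<omega>)"
    by (simp add: fun_eq_iff power2_eq_square algebra_simps)
  have ind: "integrable M (indicator A :: 'a \<Rightarrow> real)"
    using A(1) by (intro integrable_real_indicator) (simp_all add: less_top[symmetric])
  show "integrable M (\<lambda>\<omega>. indicator A \<omega> * (Z \<omega> - c)\<^sup>2)"
    unfolding expand using Z ind by simp
  define E1 where "E1 = (\<integral>\<omega>. indicator A \<omega> * Z \<omega> \<partial>M)"
  define E2 where "E2 = (\<integral>\<omega>. indicator A \<omega> * (Z \<omega>)\<^sup>2 \<partial>M)"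
  define E where "E = (\<integral>\<omega>. indicator A \<omega> * (Z \<omega> - c)\<^sup>2 \<partial>M)"
  have E: "E = E2 - 2 * c * E1 + c\<^sup>2 * measure M A"
    unfolding E_def expand E1_def E2_def using Z ind A(1) by simp
  show "cond_exp_event M A (\<lambda>\<omega>. (Z \<omega> - c)\<^sup>2) = cond_var_event M A Z + (c - cond_exp_event M A Z)\<^sup>2"
    using A(2)
    unfolding cond_var_event_def cond_exp_event_def E_def[symmetric] E1_def[symmetric] E2_def[symmetric]
    by (simp add: E field_simps power2_eq_square)
qed

lemma cond_var_event_eq_cond_exp_event:
  assumes "A \<in> sets M" "measure M A > 0"
    and "integrable M (\<lambda>\<omega>. indicator A \<omega> * Z \<omega>)" "integrable M (\<lambda>\<omega>. indicator A \<omega> * (Z \<omega>)\<^sup>2)"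
  shows "cond_var_event M A Z = cond_exp_event M A (\<lambda>\<omega>. (Z \<omega> - cond_exp_event M A Z)\<^sup>2)"
  using cond_exp_event_shifted_square(2)[OF assms] by simp

lemma cond_var_event_nonneg:
  assumes "A \<in> sets M"
    and "integrable M (\<lambda>\<omega>. indicator A \<omega> * Z \<omega>)" "integrable M (\<lambda>\<omega>. indicator A \<omega> * (Z \<omega>)\<^sup>2)"
  shows "0 \<le> cond_var_event M A Z"
proof (cases "measure M A = 0")
  case True
  then show ?thesis by (simp add: cond_var_event_def cond_exp_event_def)
next
  case False
  then have "measure M A > 0" by (simp add: zero_less_measure_iff)
  then show ?thesis
    using assms by (simp add: cond_var_event_eq_cond_exp_event cond_exp_event_def integral_nonneg_AE)
qed

lemma cond_var_event_pos:
  assumes A: "A \<in> sets M" and Z: "Z \<in> borel_measurable M"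
    and int: "integrable M (\<lambda>\<omega>. indicator A \<omega> * Z \<omega>)" "integrable M (\<lambda>\<omega>. indicator A \<omega> * (Z \<omega>)\<^sup>2)"
    and nondeg: "measure M {\<omega> \<in> A. Z \<omega> = cond_exp_event M A Z} < measure M A"
  shows "0 < cond_var_event M A Z"
proof -
  define m where "m = cond_exp_event M A Z"
  have pos: "measure M A > 0" using nondeg measure_nonneg[of M] by (meson le_less_trans)
  let ?f = "\<lambda>\<omega>. indicator A \<omega> * (Z \<omega> - m)\<^sup>2"
  have int_f: "integrable M ?f" by (rule cond_exp_event_shifted_square(1)[OF A pos int])
  have "integral\<^sup>L M ?f \<noteq> 0"
  proof
    assume "integral\<^sup>L M ?f = 0"
    then have "AE \<omega> in M. ?f \<omega> = 0"
      using integral_nonneg_eq_0_iff_AE[OF int_f] by simp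
    then have "AE \<omega> in M. \<omega> \<in> {\<omega> \<in> A. Z \<omega> = m} \<longleftrightarrow> \<omega> \<in> A"
      by eventually_elim (auto split: split_indicator)
    moreover have "{\<omega> \<in> A. Z \<omega> = m} \<in> sets M"
    proof -
      have "{\<omega> \<in> A. Z \<omega> = m} = A \<inter> {\<omega> \<in> space M. Z \<omega> = m}"
        using sets.sets_into_space[OF A] by auto
      then show ?thesis using A Z by simp
    qed
    ultimately have "measure M {\<omega> \<in> A. Z \<omega> = m} = measure M A"
      using A by (intro measure_eq_AE) auto
    then show False using nondeg by (simp add: m_def)
  qed
  moreover have "0 \<le> integral\<^sup>L M ?f" by (intro integral_nonneg_AE) simp
  ultimately have "0 < integral\<^sup>L M ?f" by (metis order_le_neq_trans)
  then show ?thesis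
    using pos A int by (simp add: cond_var_event_eq_cond_exp_event cond_exp_event_def m_def)
qed

lemma cond_var_event_mono:
  assumes sub: "A' \<subseteq> A" and A: "A' \<in> sets M" "A \<in> sets M"
    and int: "integrable M (\<lambda>\<omega>. indicator A \<omega> * Z \<omega>)" "integrable M (\<lambda>\<omega>. indicator A \<omega> * (Z \<omega>)\<^sup>2)"
  shows "measure M A' * cond_var_event M A' Z \<le> measure M A * cond_var_event M A Z"
proof -
  have restrict: "integrable M (\<lambda>\<omega>. indicator A' \<omega> * f \<omega>)"
    if "integrable M (\<lambda>\<omega>. indicator A \<omega> * f \<omega>)" for f :: "'a \<Rightarrow> real"
    using integrable_mult_indicator[OF A(1) that] sub
    by (simp add: indicator_inter_arith[symmetric] Int_absorb2 mult.assoc[symmetric])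
  note int' = restrict[OF int(1)] restrict[OF int(2)]
  show ?thesis
  proof (cases "measure M A' = 0")
    case True
    then show ?thesis using cond_var_event_nonneg[OF A(2) int] by simp
  next
    case False
    then have pos': "measure M A' > 0" by (simp add: zero_less_measure_iff)
    moreover have "measure M A' \<le> measure M A" using sub A by (intro finite_measure_mono)
    ultimately have pos: "measure M A > 0" by linarith
    define m where "m = cond_exp_event M A Z"
    have "cond_var_event M A' Z \<le> cond_exp_event M A' (\<lambda>\<omega>. (Z \<omega> - m)\<^sup>2)"
      using cond_exp_event_shifted_square(2)[OF A(1) pos' int'] by simp
    then have "measure M A' * cond_var_event M A' Z \<le> (\<integral>\<omega>. indicator A' \<omega> * (Z \<omega> - m)\<^sup>2 \<partial>M)"
      using pos' by (simp add: cond_exp_event_def field_simps)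
    also have "\<dots> \<le> (\<integral>\<omega>. indicator A \<omega> * (Z \<omega> - m)\<^sup>2 \<partial>M)"
      using sub cond_exp_event_shifted_square(1)[OF A(1) pos' int'] cond_exp_event_shifted_square(1)[OF A(2) pos int]
      by (intro integral_mono) (auto split: split_indicator)
    also have "\<dots> = measure M A * cond_var_event M A Z"
      using pos A(2) int by (simp add: cond_var_event_eq_cond_exp_event cond_exp_event_def m_def)
    finally show ?thesis .
  qed
qed

end

section \<open>Truncated covariance matrices\<close>

lemma trunc_event_sets:
  assumes "is_norm N" "X \<in> borel_measurable M"
  shows "trunc_event M X N y \<in> sets M"
proof -
  have "N \<in> borel_measurable borel"
    by (rule borel_measurable_continuous_onI[OF is_norm_continuous[OF assms(1)]])
  then show ?thesis unfolding trunc_event_def using assms(2) by measurable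
qed

lemma transpose_trunc_cov: "transpose (trunc_cov M X N y) = trunc_cov M X N y"
  by (simp add: trunc_cov_def transpose_def vec_eq_iff Let_def mult.commute)

context finite_measure
begin

lemma integrable_trunc_event:
  fixes g :: "real^'d \<Rightarrow> real"
  assumes N: "is_norm N" and X: "X \<in> borel_measurable M" and g: "continuous_on UNIV g"
  shows "integrable M (\<lambda>\<omega>. indicator (trunc_event M X N y) \<omega> * g (X \<omega>))"
proof -
  obtain k where k: "k > 0" "\<And>x. k * norm x \<le> N x" using is_norm_ge_norm[OF N] by blast
  have "compact (g ` cball 0 (y / k))"
    by (intro compact_continuous_image continuous_on_subset[OF g]) auto
  then obtain B where B: "\<And>x. x \<in> cball 0 (y / k) \<Longrightarrow> \<bar>g x\<bar> \<le> B"
    by (metis bounded_iff compact_imp_bounded imageI real_norm_def)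
  have "X \<omega> \<in> cball 0 (y / k)" if "\<omega> \<in> trunc_event M X N y" for \<omega>
    using k that by (auto simp: trunc_event_def field_simps intro: order_trans)
  moreover have "(\<lambda>\<omega>. g (X \<omega>)) \<in> borel_measurable M"
    using borel_measurable_continuous_onI[OF g] X by measurable
  ultimately show ?thesis
    using B trunc_event_sets[OF N X] by (intro integrable_indicator_mult_bounded) auto
qed

lemma trunc_cov_quadratic_form:
  assumes N: "is_norm N" and X: "X \<in> borel_measurable M"
  shows "v \<bullet> (trunc_cov M X N y *v v) = cond_var_event M (trunc_event M X N y) (\<lambda>\<omega>. v \<bullet> X \<omega>)"
proof -
  define A where "A = trunc_event M X N y"
  define E1 where "E1 i = cond_exp_event M A (\<lambda>\<omega>. X \<omega> $ i)" for i
  define E2 where "E2 i j = cond_exp_event M A (\<lambda>\<omega>. X \<omega> $ i * X \<omega> $ j)" for i j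
  have int: "integrable M (\<lambda>\<omega>. indicator A \<omega> * g (X \<omega>))" if "continuous_on UNIV g" for g :: "_ \<Rightarrow> real"
    unfolding A_def using N X that by (rule integrable_trunc_event)
  have "cond_exp_event M A (\<lambda>\<omega>. v \<bullet> X \<omega>) = (\<Sum>i\<in>UNIV. v $ i * E1 i)"
    unfolding inner_vec_def E1_def
    by (subst cond_exp_event_sum) (auto intro!: int continuous_intros simp: cond_exp_event_cmult)
  moreover have "cond_exp_event M A (\<lambda>\<omega>. (v \<bullet> X \<omega>)\<^sup>2) = (\<Sum>i\<in>UNIV. \<Sum>j\<in>UNIV. v $ i * v $ j * E2 i j)"
  proof -
    have "(v \<bullet> X \<omega>)\<^sup>2 = (\<Sum>i\<in>UNIV. \<Sum>j\<in>UNIV. v $ i * v $ j * (X \<omega> $ i * X \<omega> $ j))" for \<omega>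
      by (simp add: inner_vec_def power2_eq_square sum_product mult_ac)
    then have "cond_exp_event M A (\<lambda>\<omega>. (v \<bullet> X \<omega>)\<^sup>2) =
        cond_exp_event M A (\<lambda>\<omega>. \<Sum>i\<in>UNIV. \<Sum>j\<in>UNIV. v $ i * v $ j * (X \<omega> $ i * X \<omega> $ j))"
      by simp
    also have "\<dots> = (\<Sum>i\<in>UNIV. cond_exp_event M A (\<lambda>\<omega>. \<Sum>j\<in>UNIV. v $ i * v $ j * (X \<omega> $ i * X \<omega> $ j)))"
      by (rule cond_exp_event_sum) (intro int continuous_intros)
    also have "\<dots> = (\<Sum>i\<in>UNIV. \<Sum>j\<in>UNIV. v $ i * v $ j * E2 i j)"
      unfolding E2_def
      by (intro sum.cong refl, subst cond_exp_event_sum)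
        (auto intro!: int continuous_intros simp: cond_exp_event_cmult)
    finally show ?thesis .
  qed
  moreover have "v \<bullet> (trunc_cov M X N y *v v) =
      (\<Sum>i\<in>UNIV. \<Sum>j\<in>UNIV. v $ i * v $ j * E2 i j) - (\<Sum>i\<in>UNIV. v $ i * E1 i)\<^sup>2"
    by (simp add: trunc_cov_def Let_def A_def E1_def E2_def inner_vec_def matrix_vector_mult_def
        sum_distrib_left power2_eq_square sum_product right_diff_distrib sum_subtractf mult_ac)
  ultimately show ?thesis by (simp add: cond_var_event_def A_def)
qed

end

lemma (in prob_space) trunc_cov_uniformly_coercive:
  assumes N: "is_norm N" and X: "X \<in> borel_measurable M" and nondeg: "nondegenerate_trunc M X N \<delta>"
  obtains c where "c > 0" "\<And>y v. \<delta> \<le> y \<Longrightarrow> c * (v \<bullet> v) \<le> v \<bullet> (trunc_cov M X N y *v v)"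
proof -
  let ?A = "trunc_event M X N"
  have A: "?A y \<in> events" for y by (rule trunc_event_sets[OF N X])
  have int: "integrable M (\<lambda>\<omega>. indicator (?A y) \<omega> * (v \<bullet> X \<omega>))"
    "integrable M (\<lambda>\<omega>. indicator (?A y) \<omega> * (v \<bullet> X \<omega>)\<^sup>2)" for y v
    by (intro integrable_trunc_event[OF N X] continuous_intros)+
  have "0 < v \<bullet> (trunc_cov M X N \<delta> *v v)" if "v \<noteq> 0" for v
    unfolding trunc_cov_quadratic_form[OF N X]
    using nondeg that X by (intro cond_var_event_pos A int) (auto simp: nondegenerate_trunc_def)
  then obtain c0 where c0: "c0 > 0" "\<And>v. c0 * (v \<bullet> v) \<le> v \<bullet> (trunc_cov M X N \<delta> *v v)"
    using pos_def_matrix_coercive by blast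
  show thesis
  proof
    show "prob (?A \<delta>) * c0 > 0" using nondeg c0(1) by (simp add: nondegenerate_trunc_def)
    fix y v assume "\<delta> \<le> y"
    then have "?A \<delta> \<subseteq> ?A y" by (auto simp: trunc_event_def)
    have "prob (?A \<delta>) * c0 * (v \<bullet> v) \<le> prob (?A \<delta>) * cond_var_event M (?A \<delta>) (\<lambda>\<omega>. v \<bullet> X \<omega>)"
      using c0(2)[of v] by (simp add: trunc_cov_quadratic_form[OF N X] mult.assoc mult_left_mono)
    also have "\<dots> \<le> prob (?A y) * cond_var_event M (?A y) (\<lambda>\<omega>. v \<bullet> X \<omega>)"
      by (rule cond_var_event_mono[OF \<open>?A \<delta> \<subseteq> ?A y\<close> A A int])
    also have "\<dots> \<le> cond_var_event M (?A y) (\<lambda>\<omega>. v \<bullet> X \<omega>)"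
      using cond_var_event_nonneg[OF A int] by (intro mult_left_le_one_le) auto
    finally show "prob (?A \<delta>) * c0 * (v \<bullet> v) \<le> v \<bullet> (trunc_cov M X N y *v v)"
      by (simp add: trunc_cov_quadratic_form[OF N X])
  qed
qed

lemma regvar_tail_nonzero:
  assumes "regvar_tail M R \<alpha>"
  obtains t where "t \<ge> t0" "measure M {\<omega> \<in> space M. t < R \<omega>} \<noteq> 0"
proof -
  let ?tail = "\<lambda>t. measure M {\<omega> \<in> space M. t < R \<omega>}"
  have "\<exists>t\<ge>t0. ?tail t \<noteq> 0"
  proof (rule ccontr)
    assume none: "\<not> (\<exists>t\<ge>t0. ?tail t \<noteq> 0)"
    have "\<forall>\<^sub>F t in at_top. ?tail t / ?tail t = 0"
      using eventually_ge_at_top[of t0] by (rule eventually_mono) (use none in auto)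
    then have "((\<lambda>t. ?tail t / ?tail t) \<longlongrightarrow> 0) at_top" by (rule tendsto_eventually)
    moreover have "((\<lambda>t. ?tail t / ?tail t) \<longlongrightarrow> 1) at_top"
      using assms[unfolded regvar_tail_def, rule_format, of 1] by simp
    ultimately show False using tendsto_unique[OF trivial_limit_at_top_linorder] by force
  qed
  then show thesis using that by blast
qed

theorem lemmaB1:
  fixes M :: "'a measure" and X :: "'a \<Rightarrow> real^'d" and N :: "real^'d \<Rightarrow> real" and \<alpha> :: real
  assumes "prob_space M"
    and "is_norm N"
    and "X \<in> borel_measurable M"
    and C1: "\<And>y. y > 0 \<Longrightarrow> nondegenerate_trunc M X N y"
    and C2_ac: "absolutely_continuous lborel (distr M borel (\<lambda>\<omega>. N (X \<omega>)))"
    and C2_rv: "regvar_tail M (\<lambda>\<omega>. N (X \<omega>)) \<alpha>"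
    and "\<alpha> > 0"
    and "2 < \<alpha>" and "\<alpha> \<le> 3"
  shows "\<exists>C>0. \<exists>\<delta>>0. measure M (trunc_event M X N \<delta>) < 1 \<and>
           (\<forall>y\<ge>\<delta>. inv_sqrt_opnorm (trunc_cov M X N y) \<le> C)"
proof -
  interpret prob_space M by (rule assms(1))
  obtain \<delta> where "\<delta> \<ge> 1" and tail: "prob {\<omega> \<in> space M. \<delta> < N (X \<omega>)} \<noteq> 0"
    using regvar_tail_nonzero[OF C2_rv] by blast
  have "{\<omega> \<in> space M. \<delta> < N (X \<omega>)} = space M - trunc_event M X N \<delta>"
    by (auto simp: trunc_event_def)
  then have "prob (trunc_event M X N \<delta>) = 1 - prob {\<omega> \<in> space M. \<delta> < N (X \<omega>)}"
    using prob_compl[OF trunc_event_sets[OF assms(2,3)]] by simp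
  moreover have "prob {\<omega> \<in> space M. \<delta> < N (X \<omega>)} > 0"
    using tail measure_nonneg by (metis order_le_neq_trans)
  ultimately have "prob (trunc_event M X N \<delta>) < 1" by linarith
  have "\<delta> > 0" using \<open>\<delta> \<ge> 1\<close> by simp
  obtain c where "c > 0" and coercive: "\<And>y v. \<delta> \<le> y \<Longrightarrow> c * (v \<bullet> v) \<le> v \<bullet> (trunc_cov M X N y *v v)"
    using trunc_cov_uniformly_coercive[OF assms(2,3) C1[OF \<open>\<delta> > 0\<close>]] by blast
  have "inv_sqrt_opnorm (trunc_cov M X N y) \<le> 1 / sqrt c" if "y \<ge> \<delta>" for y
    using transpose_trunc_cov \<open>c > 0\<close> coercive[OF that] by (rule inv_sqrt_opnorm_le)
  then show ?thesis
    using \<open>c > 0\<close> \<open>\<delta> > 0\<close> \<open>prob (trunc_event M X N \<delta>) < 1\<close>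
    by (intro exI[of _ "1 / sqrt c"] exI[of _ \<delta>]) auto
qed

end
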